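(* Let $N^{[0]}$ be a $C^0$ net on the grid $T^{[0]}$ with lines $s^{[0]}_i=t^{[0]}_i=i$, $i\in\mathbb{Z}$, and let $N^{[k]}$, $k\ge0$, be the nets generated from $N^{[0]}$ by the corner cutting algorithm for nets of functions (described in the context) with arbitrary weights $\boldsymbol{\gamma}^{[s],[k]},\boldsymbol{\gamma}^{[t],[k]}\in\mathscr{W}$. If $N^{[0]}$ has the BMSDD property with constant $L$, then $N^{[k]}$ has the BMSDD property with constant $3^kL$ for every $k\ge0$.
   Context: $\mathscr{W}$ is the set of pairs $(\boldsymbol{\alpha},\boldsymbol{\beta})$ of real bi-infinite sequences with $\inf_i\min\{\alpha_i,1-\beta_i,\beta_i-\alpha_i\}>0$. For strictly increasing bi-infinite real sequences $(s_i)$, $(t_j)$, unbounded above and below, the grid is $T=\bigcup_i\{s_i\}\times\mathbb{R}\cup\bigcup_j\mathbb{R}\times\{t_j\}$. A net $N(T)$ is a function on $T$ with values in $\mathbb{R}^m$; it is $C^0$ if all u-functions $s\mapsto N(s,t_j)$, $t\mapsto N(s_i,t)$ are continuous. The piecewise Coons patch $\mathcal{C}(N)$ is defined on each rectangle $[s_i,s_{i+1}]\times[t_j,t_{j+1}]$, with $h_1=s_{i+1}-s_i$, $h_2=t_{j+1}-t_j$, by $\mathcal{C}(N)(s,t)=\frac{s_{i+1}-s}{h_1}N(s_i,t)+\frac{s-s_i}{h_1}N(s_{i+1},t)+\frac{t_{j+1}-t}{h_2}N(s,t_j)+\frac{t-t_j}{h_2}N(s,t_{j+1})-B(s,t)$,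 with $B(s,t)=\frac{s_{i+1}-s}{h_1}\big(\frac{t_{j+1}-t}{h_2}N(s_i,t_j)+\frac{t-t_j}{h_2}N(s_i,t_{j+1})\big)+\frac{s-s_i}{h_1}\big(\frac{t_{j+1}-t}{h_2}N(s_{i+1},t_j)+\frac{t-t_j}{h_2}N(s_{i+1},t_{j+1})\big)$. Algorithm: given $N^{[k]}$ on grid $T^{[k]}$ with lines $s^{[k]}_i,t^{[k]}_j$, set $s^{[k+1]}_{2i}=(1-\alpha^{[s],[k]}_i)s^{[k]}_i+\alpha^{[s],[k]}_is^{[k]}_{i+1}$, $s^{[k+1]}_{2i+1}=(1-\beta^{[s],[k]}_i)s^{[k]}_i+\beta^{[s],[k]}_is^{[k]}_{i+1}$, and analogously for $t^{[k+1]}$ with $\boldsymbol{\gamma}^{[t],[k]}=(\boldsymbol{\alpha}^{[t],[k]},\boldsymbol{\beta}^{[t],[k]})$; $T^{[k+1]}$ is the grid with these lines and $N^{[k+1]}=\mathcal{C}(N^{[k]})|_{T^{[k+1]}}$. For $\sigma_1\ne\sigma_2$, $\tau_1\ne\tau_2$, $[\sigma_1,\sigma_2;\tau_1,\tau_2]N=\frac{N(\sigma_1,\tau_1)+N(\sigma_2,\tau_2)-N(\sigma_2,\tau_1)-N(\sigma_1,\tau_2)}{(\sigma_1-\sigma_2)(\tau_1-\tau_2)}$; a net on a grid has the BMSDD property with constant $L$ if $\|[\sigma_1,\sigma_2;\tau_1,\tau_2]N\|_\infty\le L$ whenever all four points $(\sigma_i,\tau_j)$ lie on the grid. *)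

theory Defs
  imports "HOL-Analysis.Analysis"
begin

text \<open>Weights: pairs of bi-infinite sequences in the class W.
  The condition inf_i min(alpha_i, 1 - beta_i, beta_i - alpha_i) > 0 is written out
  as the existence of a uniform positive lower bound.\<close>
definition weightW :: "(int \<Rightarrow> real) \<Rightarrow> (int \<Rightarrow> real) \<Rightarrow> bool" where
  "weightW \<alpha> \<beta> \<longleftrightarrow>
     (\<exists>\<delta>>0. \<forall>i. \<delta> \<le> \<alpha> i \<and> \<delta> \<le> 1 - \<beta> i \<and> \<delta> \<le> \<beta> i - \<alpha> i)"

definition grid :: "(int \<Rightarrow> real) \<Rightarrow> (int \<Rightarrow> real) \<Rightarrow> (real \<times> real) set" where
  "grid s t = {(x, y). (\<exists>i. x = s i) \<or> (\<exists>j. y = t j)}"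

definition cell_idx :: "(int \<Rightarrow> real) \<Rightarrow> real \<Rightarrow> int" where
  "cell_idx s x = (THE i. s i \<le> x \<and> x < s (i + 1))"

definition coons :: "(int \<Rightarrow> real) \<Rightarrow> (int \<Rightarrow> real) \<Rightarrow> (real \<times> real \<Rightarrow> 'a::real_vector)
    \<Rightarrow> real \<times> real \<Rightarrow> 'a" where
  "coons s t N = (\<lambda>(x, y).
     let i = cell_idx s x; j = cell_idx t y;
         h1 = s (i + 1) - s i; h2 = t (j + 1) - t j;
         a0 = (s (i + 1) - x) / h1; a1 = (x - s i) / h1;
         b0 = (t (j + 1) - y) / h2; b1 = (y - t j) / h2;
         B = a0 *\<^sub>R (b0 *\<^sub>R N (s i, t j) + b1 *\<^sub>R N (s i, t (j + 1)))
           + a1 *\<^sub>R (b0 *\<^sub>R N (s (i + 1), t j) + b1 *\<^sub>R N (s (i + 1), t (j + 1)))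
     in a0 *\<^sub>R N (s i, y) + a1 *\<^sub>R N (s (i + 1), y)
        + b0 *\<^sub>R N (x, t j) + b1 *\<^sub>R N (x, t (j + 1)) - B)"

definition refine :: "(int \<Rightarrow> real) \<Rightarrow> (int \<Rightarrow> real) \<Rightarrow> (int \<Rightarrow> real) \<Rightarrow> int \<Rightarrow> real" where
  "refine \<alpha> \<beta> s = (\<lambda>m. let i = m div 2 in
      if even m then (1 - \<alpha> i) * s i + \<alpha> i * s (i + 1)
      else (1 - \<beta> i) * s i + \<beta> i * s (i + 1))"

definition C0_net :: "(int \<Rightarrow> real) \<Rightarrow> (int \<Rightarrow> real) \<Rightarrow> (real \<times> real \<Rightarrow> 'a::topological_space) \<Rightarrow> bool" where
  "C0_net s t N \<longleftrightarrow> (\<forall>j. continuous_on UNIV (\<lambda>x. N (x, t j))) \<and>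
                     (\<forall>i. continuous_on UNIV (\<lambda>y. N (s i, y)))"

definition mdd :: "(real \<times> real \<Rightarrow> 'a::real_vector) \<Rightarrow> real \<Rightarrow> real \<Rightarrow> real \<Rightarrow> real \<Rightarrow> 'a" where
  "mdd N \<sigma>1 \<sigma>2 \<tau>1 \<tau>2 = (1 / ((\<sigma>1 - \<sigma>2) * (\<tau>1 - \<tau>2))) *\<^sub>R
      (N (\<sigma>1, \<tau>1) + N (\<sigma>2, \<tau>2) - N (\<sigma>2, \<tau>1) - N (\<sigma>1, \<tau>2))"

definition BMSDD :: "(int \<Rightarrow> real) \<Rightarrow> (int \<Rightarrow> real) \<Rightarrow> (real \<times> real \<Rightarrow> 'a::euclidean_space) \<Rightarrow> real \<Rightarrow> bool" where
  "BMSDD s t N L \<longleftrightarrow> (\<forall>\<sigma>1 \<sigma>2 \<tau>1 \<tau>2. \<sigma>1 \<noteq> \<sigma>2 \<longrightarrow> \<tau>1 \<noteq> \<tau>2 \<longrightarrow>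
      (\<sigma>1, \<tau>1) \<in> grid s t \<longrightarrow> (\<sigma>1, \<tau>2) \<in> grid s t \<longrightarrow>
      (\<sigma>2, \<tau>1) \<in> grid s t \<longrightarrow> (\<sigma>2, \<tau>2) \<in> grid s t \<longrightarrow>
      infnorm (mdd N \<sigma>1 \<sigma>2 \<tau>1 \<tau>2) \<le> L)"

end

theory Submission
  imports Defs
begin

text \<open>The Coons patch is the Boolean sum \<open>P\<^sub>s + P\<^sub>t - P\<^sub>s P\<^sub>t\<close> of the
  piecewise linear interpolants along the vertical lines \<open>s\<^sub>i\<close> and along the horizontal
  lines \<open>t\<^sub>j\<close>. The numerator of a mixed divided difference of \<open>P\<^sub>s N\<close> is a
  difference of values of one piecewise linear interpolant, namely of the differences
  \<open>N(s\<^sub>i, \<tau>\<^sub>1) - N(s\<^sub>i, \<tau>\<^sub>2)\<close>, whose slopes are mixed divided differences of \<open>N\<close>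
  on the grid. Piecewise linear interpolation does not increase Lipschitz constants, so each
  of the three terms, and each component, has mixed divided differences bounded by \<open>L\<close>, and
  the patch by \<open>3 L\<close>. The refined net is the restriction of the patch, so induction gives
  \<open>3\<^sup>k L\<close>; the refined lines again form a grid because the weights are in W.\<close>

definition grid_lines :: "(int \<Rightarrow> real) \<Rightarrow> bool" where
  "grid_lines s \<longleftrightarrow> strict_mono s \<and> (\<forall>x. \<exists>i. x < s i) \<and> (\<forall>x. \<exists>i. s i < x)"

lemma strict_mono_intI:
  fixes f :: "int \<Rightarrow> 'a::order"
  assumes "\<And>i. f i < f (i + 1)"
  shows "strict_mono f"
proof (rule strict_monoI)
  fix i j :: int
  assume "i < j"
  then show "f i < f j"
    by (induction j rule: int_gr_induct) (use assms order.strict_trans in blast)+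
qed

lemma grid_lines_of_int: "grid_lines real_of_int"
  unfolding grid_lines_def
proof (intro conjI allI)
  show "strict_mono real_of_int"
    by (rule strict_mono_intI) simp
  fix x :: real
  show "\<exists>i. x < real_of_int i"
    by (rule exI[of _ "\<lceil>x\<rceil> + 1"]) linarith
  show "\<exists>i. real_of_int i < x"
    by (rule exI[of _ "\<lfloor>x\<rfloor> - 1"]) linarith
qed

lemma grid_lines_gap: "grid_lines s \<Longrightarrow> 0 < s (i + 1) - s i"
  by (simp add: grid_lines_def strict_mono_less)

lemma refine_even: "refine \<alpha> \<beta> s (2 * i) = s i + \<alpha> i * (s (i + 1) - s i)"
  by (simp add: refine_def algebra_simps)

lemma refine_odd: "refine \<alpha> \<beta> s (2 * i + 1) = s i + \<beta> i * (s (i + 1) - s i)"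
  by (simp add: refine_def algebra_simps)

lemma grid_lines_refine:
  assumes W: "weightW \<alpha> \<beta>" and s: "grid_lines s"
  shows "grid_lines (refine \<alpha> \<beta> s)"
proof -
  let ?r = "refine \<alpha> \<beta> s"
  obtain \<delta> where "\<delta> > 0" and \<delta>: "\<And>i. \<delta> \<le> \<alpha> i \<and> \<delta> \<le> 1 - \<beta> i \<and> \<delta> \<le> \<beta> i - \<alpha> i"
    using W unfolding weightW_def by blast
  then have weights: "0 < \<alpha> i" "\<alpha> i < \<beta> i" "\<beta> i < 1" for i
    using \<delta>[of i] by linarith+
  have lower: "s i < ?r (2 * i)" and middle: "?r (2 * i) < ?r (2 * i + 1)"
    and upper: "?r (2 * i + 1) < s (i + 1)" for i
  proof -
    have "0 < \<alpha> i * (s (i + 1) - s i)" "0 < (\<beta> i - \<alpha> i) * (s (i + 1) - s i)"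
      "0 < (1 - \<beta> i) * (s (i + 1) - s i)"
      using weights[of i] grid_lines_gap[OF s, of i] by simp_all
    then show "s i < ?r (2 * i)" "?r (2 * i) < ?r (2 * i + 1)" "?r (2 * i + 1) < s (i + 1)"
      unfolding refine_even refine_odd by (simp_all add: algebra_simps)
  qed
  have "?r m < ?r (m + 1)" for m
  proof (cases "even m")
    case True
    then obtain i where "m = 2 * i" by blast
    then show ?thesis using middle[of i] by simp
  next
    case False
    then obtain i where m: "m = 2 * i + 1" using oddE by blast
    then have "m + 1 = 2 * (i + 1)" by simp
    then show ?thesis using m upper[of i] lower[of "i + 1"] by (metis less_trans)
  qed
  then have "strict_mono ?r" by (rule strict_mono_intI)
  moreover have "\<exists>m. x < ?r m" for x
    using s lower unfolding grid_lines_def by (meson less_trans)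
  moreover have "\<exists>m. ?r m < x" for x
  proof -
    obtain j where "s j < x" using s unfolding grid_lines_def by blast
    then show ?thesis using upper[of "j - 1"] by (metis diff_add_cancel less_trans)
  qed
  ultimately show ?thesis unfolding grid_lines_def by blast
qed

lemma cell_unique:
  assumes "grid_lines s" "s i \<le> x" "x < s (i + 1)" "s k \<le> x" "x < s (k + 1)"
  shows "k = i"
proof -
  have "s k < s (i + 1)" "s i < s (k + 1)"
    using assms by linarith+
  then show "k = i"
    using assms(1) by (simp add: grid_lines_def strict_mono_less)
qed

lemma cell_idx_eqI:
  assumes "grid_lines s" "s i \<le> x" "x < s (i + 1)"
  shows "cell_idx s x = i"
  unfolding cell_idx_def using assms cell_unique by blast

lemma cell_exists:
  assumes "grid_lines s"
  obtains i where "s i \<le> x" "x < s (i + 1)"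
proof -
  have mono: "strict_mono s" using assms unfolding grid_lines_def by blast
  obtain i0 j where "s i0 < x" "x < s j" using assms unfolding grid_lines_def by blast
  define I where "I = {i0..j} \<inter> {i. s i \<le> x}"
  have "finite I" "i0 \<in> I"
    using \<open>s i0 < x\<close> \<open>x < s j\<close> strict_mono_less[OF mono, of i0 j] by (auto simp: I_def)
  define i where "i = Max I"
  have "i \<in> I" unfolding i_def using Max_in[OF \<open>finite I\<close>] \<open>i0 \<in> I\<close> by blast
  then have "s i \<le> x" "i0 \<le> i" by (simp_all add: I_def)
  then have "i < j" using \<open>x < s j\<close> strict_mono_less[OF mono, of i j] by linarith
  have "x < s (i + 1)"
  proof (rule ccontr)
    assume "\<not> x < s (i + 1)"
    then have "i + 1 \<in> I" using \<open>i0 \<le> i\<close> \<open>i < j\<close> by (simp add: I_def)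
    then show False using \<open>finite I\<close> Max_ge[of I "i + 1"] by (simp add: i_def)
  qed
  then show thesis using that \<open>s i \<le> x\<close> by blast
qed

lemma cell_idx_bounds:
  assumes "grid_lines s"
  shows "s (cell_idx s x) \<le> x" "x < s (cell_idx s x + 1)"
  using cell_exists[OF assms, of x] cell_idx_eqI[OF assms] by metis+

lemma cell_idx_mono:
  assumes "grid_lines s" "x \<le> y"
  shows "cell_idx s x \<le> cell_idx s y"
proof -
  have "s (cell_idx s x) < s (cell_idx s y + 1)"
    using cell_idx_bounds[OF assms(1)] assms(2) by (meson le_less_trans order_trans)
  then show ?thesis
    using assms(1) by (simp add: grid_lines_def strict_mono_less)
qed

definition pl_interp :: "(int \<Rightarrow> real) \<Rightarrow> (int \<Rightarrow> real) \<Rightarrow> real \<Rightarrow> real" where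
  "pl_interp s g x = (let i = cell_idx s x; h = s (i + 1) - s i in
     (s (i + 1) - x) / h * g i + (x - s i) / h * g (i + 1))"

lemma pl_interp_diff: "pl_interp s (\<lambda>i. f i - g i) x = pl_interp s f x - pl_interp s g x"
  by (simp add: pl_interp_def Let_def right_diff_distrib)

lemma pl_interp_on_cell:
  assumes "grid_lines s" "s i \<le> x" "x \<le> s (i + 1)"
  shows "pl_interp s g x = g i + (x - s i) / (s (i + 1) - s i) * (g (i + 1) - g i)"
proof (cases "x = s (i + 1)")
  case True
  have "s i < s (i + 1)" "s (i + 1) < s (i + 1 + 1)"
    using grid_lines_gap[OF assms(1), of i] grid_lines_gap[OF assms(1), of "i + 1"] by simp_all
  moreover from this have "cell_idx s x = i + 1"
    using True cell_idx_eqI[OF assms(1)] by simp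
  ultimately show ?thesis using True by (simp add: pl_interp_def Let_def)
next
  case False
  define a where "a = (x - s i) / (s (i + 1) - s i)"
  have "cell_idx s x = i" using False cell_idx_eqI[OF assms(1,2)] assms(3) by simp
  then have "pl_interp s g x = (s (i + 1) - x) / (s (i + 1) - s i) * g i + a * g (i + 1)"
    by (simp add: pl_interp_def Let_def a_def)
  moreover have "(s (i + 1) - x) / (s (i + 1) - s i) = 1 - a"
    using grid_lines_gap[OF assms(1), of i] by (simp add: a_def diff_divide_eq_iff)
  ultimately have "pl_interp s g x = (1 - a) * g i + a * g (i + 1)"
    by (simp only:)
  then show ?thesis unfolding a_def[symmetric] by (simp add: algebra_simps)
qed

lemma lipschitz_pl_interp:
  assumes s: "grid_lines s" and slope: "\<And>i. \<bar>g (i + 1) - g i\<bar> \<le> K * (s (i + 1) - s i)"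
  shows "K-lipschitz_on UNIV (pl_interp s g)"
proof -
  note gap = grid_lines_gap[OF s]
  have "0 \<le> K"
    using slope[of 0] gap[of 0] by (meson abs_ge_zero order_trans zero_le_mult_iff not_less)
  have on_cell: "K-lipschitz_on {s i..s (i + 1)} (pl_interp s g)" for i
  proof (rule lipschitz_onI)
    fix x y assume "x \<in> {s i..s (i + 1)}" "y \<in> {s i..s (i + 1)}"
    then have "pl_interp s g x - pl_interp s g y = (x - y) * ((g (i + 1) - g i) / (s (i + 1) - s i))"
      using pl_interp_on_cell[OF s, of i x g] pl_interp_on_cell[OF s, of i y g]
      by (simp add: diff_divide_distrib algebra_simps)
    then have "dist (pl_interp s g x) (pl_interp s g y)
        = \<bar>x - y\<bar> * (\<bar>g (i + 1) - g i\<bar> / (s (i + 1) - s i))"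
      using gap[of i] by (simp add: dist_real_def abs_mult)
    also have "\<dots> \<le> \<bar>x - y\<bar> * K"
      using gap[of i] slope[of i] by (intro mult_left_mono) (simp_all add: divide_le_eq)
    finally show "dist (pl_interp s g x) (pl_interp s g y) \<le> K * dist x y"
      by (simp add: dist_real_def mult.commute)
  qed fact
  show ?thesis
  proof (rule lipschitz_onI)
    fix x y :: real
    let ?u = "min x y" and ?v = "max x y"
    have "{?u..?v} \<subseteq> (\<Union>i\<in>{cell_idx s ?u..cell_idx s ?v}. {s i..s (i + 1)})"
    proof
      fix z assume "z \<in> {?u..?v}"
      then show "z \<in> (\<Union>i\<in>{cell_idx s ?u..cell_idx s ?v}. {s i..s (i + 1)})"
        using cell_idx_mono[OF s] cell_idx_bounds[OF s, of z] by (intro UN_I[of "cell_idx s z"]) auto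
    qed
    then have "K-lipschitz_on {?u..?v} (pl_interp s g)"
      by (intro lipschitz_on_closed_Union[OF on_cell]) (simp_all add: \<open>0 \<le> K\<close>)
    then show "dist (pl_interp s g x) (pl_interp s g y) \<le> K * dist x y"
      by (rule lipschitz_onD) auto
  qed fact
qed

definition mixed_diff :: "('a \<times> 'b \<Rightarrow> 'c::ab_group_add) \<Rightarrow> 'a \<Rightarrow> 'a \<Rightarrow> 'b \<Rightarrow> 'b \<Rightarrow> 'c" where
  "mixed_diff N \<sigma>1 \<sigma>2 \<tau>1 \<tau>2 = N (\<sigma>1, \<tau>1) + N (\<sigma>2, \<tau>2) - N (\<sigma>2, \<tau>1) - N (\<sigma>1, \<tau>2)"

lemma abs_mdd_le_iff:
  fixes M :: "real \<times> real \<Rightarrow> real"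
  assumes "\<sigma>1 \<noteq> \<sigma>2" "\<tau>1 \<noteq> \<tau>2"
  shows "\<bar>mdd M \<sigma>1 \<sigma>2 \<tau>1 \<tau>2\<bar> \<le> L \<longleftrightarrow>
    \<bar>mixed_diff M \<sigma>1 \<sigma>2 \<tau>1 \<tau>2\<bar> \<le> L * \<bar>\<sigma>1 - \<sigma>2\<bar> * \<bar>\<tau>1 - \<tau>2\<bar>"
proof -
  have "\<bar>mdd M \<sigma>1 \<sigma>2 \<tau>1 \<tau>2\<bar> = \<bar>mixed_diff M \<sigma>1 \<sigma>2 \<tau>1 \<tau>2\<bar> / (\<bar>\<sigma>1 - \<sigma>2\<bar> * \<bar>\<tau>1 - \<tau>2\<bar>)"
    by (simp add: mdd_def mixed_diff_def abs_mult)
  moreover have "0 < \<bar>\<sigma>1 - \<sigma>2\<bar> * \<bar>\<tau>1 - \<tau>2\<bar>"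
    using assms by simp
  ultimately show ?thesis
    by (simp add: pos_divide_le_eq mult_ac)
qed

lemma infnorm_real: "infnorm (x::real) = \<bar>x\<bar>"
  by (simp add: infnorm_Max)

lemma BMSDD_mixed_diff_le:
  fixes M :: "real \<times> real \<Rightarrow> real"
  assumes "BMSDD s t M L"
    and "(\<sigma>1, \<tau>1) \<in> grid s t" "(\<sigma>1, \<tau>2) \<in> grid s t" "(\<sigma>2, \<tau>1) \<in> grid s t" "(\<sigma>2, \<tau>2) \<in> grid s t"
  shows "\<bar>mixed_diff M \<sigma>1 \<sigma>2 \<tau>1 \<tau>2\<bar> \<le> L * \<bar>\<sigma>1 - \<sigma>2\<bar> * \<bar>\<tau>1 - \<tau>2\<bar>"
proof (cases "\<sigma>1 = \<sigma>2 \<or> \<tau>1 = \<tau>2")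
  case True
  then show ?thesis by (auto simp: mixed_diff_def)
next
  case False
  then have "\<bar>mdd M \<sigma>1 \<sigma>2 \<tau>1 \<tau>2\<bar> \<le> L"
    using assms unfolding BMSDD_def infnorm_real by blast
  with False show ?thesis by (simp add: abs_mdd_le_iff)
qed

lemma BMSDD_mixed_diff_across_lines:
  fixes M :: "real \<times> real \<Rightarrow> real"
  assumes "grid_lines s" "grid_lines t" "BMSDD s t M L"
  shows "\<bar>mixed_diff M (s (i + 1)) (s i) y1 y2\<bar> \<le> L * (s (i + 1) - s i) * \<bar>y1 - y2\<bar>"
    and "\<bar>mixed_diff M x1 x2 (t (j + 1)) (t j)\<bar> \<le> L * \<bar>x1 - x2\<bar> * (t (j + 1) - t j)"
proof -
  have "(s i, y) \<in> grid s t" "(x, t j) \<in> grid s t" for i j x y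
    by (auto simp: grid_def)
  with assms show "\<bar>mixed_diff M (s (i + 1)) (s i) y1 y2\<bar> \<le> L * (s (i + 1) - s i) * \<bar>y1 - y2\<bar>"
    "\<bar>mixed_diff M x1 x2 (t (j + 1)) (t j)\<bar> \<le> L * \<bar>x1 - x2\<bar> * (t (j + 1) - t j)"
    using BMSDD_mixed_diff_le[OF assms(3)] grid_lines_gap by (metis abs_of_pos)+
qed

lemma abs_mdd_pl_interp_le:
  fixes F :: "int \<Rightarrow> real \<Rightarrow> real"
  assumes s: "grid_lines s"
    and slope: "\<And>i y1 y2. \<bar>mixed_diff (case_prod F) (i + 1) i y1 y2\<bar> \<le> L * (s (i + 1) - s i) * \<bar>y1 - y2\<bar>"
    and "x1 \<noteq> x2" "y1 \<noteq> y2"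
  shows "\<bar>mdd (\<lambda>(x, y). pl_interp s (\<lambda>i. F i y) x) x1 x2 y1 y2\<bar> \<le> L"
proof -
  define G where "G = (\<lambda>i. F i y1 - F i y2)"
  have "(L * \<bar>y1 - y2\<bar>)-lipschitz_on UNIV (pl_interp s G)"
    by (rule lipschitz_pl_interp[OF s])
      (use slope in \<open>simp add: G_def mixed_diff_def algebra_simps\<close>)
  then have "\<bar>pl_interp s G x1 - pl_interp s G x2\<bar> \<le> L * \<bar>y1 - y2\<bar> * \<bar>x1 - x2\<bar>"
    by (auto dest: lipschitz_onD[of _ UNIV _ x1 x2] simp: dist_real_def)
  moreover have "mixed_diff (\<lambda>(x, y). pl_interp s (\<lambda>i. F i y) x) x1 x2 y1 y2
      = pl_interp s G x1 - pl_interp s G x2"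
    by (simp add: mixed_diff_def G_def pl_interp_diff)
  ultimately show ?thesis
    using assms by (simp add: abs_mdd_le_iff mult_ac)
qed

lemma coons_eq_pl_interp:
  fixes M :: "real \<times> real \<Rightarrow> real"
  shows "coons s t M (x, y) = pl_interp s (\<lambda>i. M (s i, y)) x + pl_interp t (\<lambda>j. M (x, t j)) y
    - pl_interp s (\<lambda>i. pl_interp t (\<lambda>j. M (s i, t j)) y) x"
  by (simp add: coons_def pl_interp_def Let_def)

lemma mdd_add_diff:
  "mdd (\<lambda>p. f p + g p - h p) \<sigma>1 \<sigma>2 \<tau>1 \<tau>2 = mdd f \<sigma>1 \<sigma>2 \<tau>1 \<tau>2 + mdd g \<sigma>1 \<sigma>2 \<tau>1 \<tau>2 - mdd h \<sigma>1 \<sigma>2 \<tau>1 \<tau>2"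
  by (simp add: mdd_def algebra_simps)

lemma mdd_transpose: "mdd (\<lambda>(y, x). N (x, y)) \<tau>1 \<tau>2 \<sigma>1 \<sigma>2 = mdd N \<sigma>1 \<sigma>2 \<tau>1 \<tau>2"
  by (simp add: mdd_def algebra_simps)

lemma abs_mdd_coons_le:
  fixes M :: "real \<times> real \<Rightarrow> real"
  assumes s: "grid_lines s" and t: "grid_lines t" and M: "BMSDD s t M L"
    and x: "x1 \<noteq> x2" and y: "y1 \<noteq> y2"
  shows "\<bar>mdd (coons s t M) x1 x2 y1 y2\<bar> \<le> 3 * L"
proof -
  note across_s = BMSDD_mixed_diff_across_lines(1)[OF s t M]
    and across_t = BMSDD_mixed_diff_across_lines(2)[OF s t M]
  define P1 where "P1 = (\<lambda>(x, y). pl_interp s (\<lambda>i. M (s i, y)) x)"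
  define P2 where "P2 = (\<lambda>(x, y). pl_interp t (\<lambda>j. M (x, t j)) y)"
  define P12 where "P12 = (\<lambda>(x, y). pl_interp s (\<lambda>i. pl_interp t (\<lambda>j. M (s i, t j)) y) x)"
  have "\<bar>mdd P1 x1 x2 y1 y2\<bar> \<le> L"
    unfolding P1_def using abs_mdd_pl_interp_le[OF s _ x y, of "\<lambda>i b. M (s i, b)"] across_s
    by (simp add: mixed_diff_def)
  moreover have "\<bar>mdd P2 x1 x2 y1 y2\<bar> \<le> L"
  proof -
    have "\<bar>mdd (\<lambda>(y, x). pl_interp t (\<lambda>j. M (x, t j)) y) y1 y2 x1 x2\<bar> \<le> L"
      using abs_mdd_pl_interp_le[OF t _ y x, of "\<lambda>j a. M (a, t j)"] across_t
      by (simp add: mixed_diff_def algebra_simps)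
    then show ?thesis
      using mdd_transpose[of P2] by (simp add: P2_def case_prod_beta)
  qed
  moreover have "\<bar>mdd P12 x1 x2 y1 y2\<bar> \<le> L"
    unfolding P12_def
  proof (rule abs_mdd_pl_interp_le[OF s _ x y])
    fix i b1 b2
    let ?H = "\<lambda>j. M (s (i + 1), t j) - M (s i, t j)"
    have "(L * (s (i + 1) - s i))-lipschitz_on UNIV (pl_interp t ?H)"
    proof (rule lipschitz_pl_interp[OF t])
      fix j
      have "?H (j + 1) - ?H j = mixed_diff M (s (i + 1)) (s i) (t (j + 1)) (t j)"
        by (simp add: mixed_diff_def)
      then show "\<bar>?H (j + 1) - ?H j\<bar> \<le> L * (s (i + 1) - s i) * (t (j + 1) - t j)"
        using across_s[of i "t (j + 1)" "t j"] grid_lines_gap[OF t, of j] by simp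
    qed
    then show "\<bar>mixed_diff (\<lambda>(i, b). pl_interp t (\<lambda>j. M (s i, t j)) b) (i + 1) i b1 b2\<bar>
        \<le> L * (s (i + 1) - s i) * \<bar>b1 - b2\<bar>"
      by (auto dest: lipschitz_onD[of _ UNIV _ b1 b2]
          simp: dist_real_def mixed_diff_def pl_interp_diff algebra_simps)
  qed
  moreover have "coons s t M = (\<lambda>p. P1 p + P2 p - P12 p)"
    by (auto simp: P1_def P2_def P12_def coons_eq_pl_interp)
  ultimately show ?thesis
    by (simp add: mdd_add_diff)
qed

lemma mdd_inner: "mdd N \<sigma>1 \<sigma>2 \<tau>1 \<tau>2 \<bullet> b = mdd (\<lambda>p. N p \<bullet> b) \<sigma>1 \<sigma>2 \<tau>1 \<tau>2"
  by (simp add: mdd_def inner_simps)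

lemma coons_inner: "coons s t N p \<bullet> b = coons s t (\<lambda>q. N q \<bullet> b) p"
  by (cases p) (simp add: coons_def Let_def inner_simps)

lemma BMSDD_inner_Basis:
  assumes "BMSDD s t N L" "b \<in> Basis"
  shows "BMSDD s t (\<lambda>p. N p \<bullet> b) L"
  unfolding BMSDD_def infnorm_real mdd_inner[symmetric]
  using assms(1) Basis_le_infnorm[OF assms(2)] unfolding BMSDD_def by (meson order_trans)

lemma BMSDD_coons:
  fixes N N' :: "real \<times> real \<Rightarrow> 'a::euclidean_space"
  assumes s: "grid_lines s" and t: "grid_lines t" and N: "BMSDD s t N L"
    and N': "\<And>p. p \<in> grid s' t' \<Longrightarrow> N' p = coons s t N p"
  shows "BMSDD s' t' N' (3 * L)"
  unfolding BMSDD_def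
proof (intro allI impI)
  fix \<sigma>1 \<sigma>2 \<tau>1 \<tau>2
  assume x: "\<sigma>1 \<noteq> \<sigma>2" and y: "\<tau>1 \<noteq> \<tau>2"
    and "(\<sigma>1, \<tau>1) \<in> grid s' t'" "(\<sigma>1, \<tau>2) \<in> grid s' t'"
      "(\<sigma>2, \<tau>1) \<in> grid s' t'" "(\<sigma>2, \<tau>2) \<in> grid s' t'"
  then have "mdd N' \<sigma>1 \<sigma>2 \<tau>1 \<tau>2 = mdd (coons s t N) \<sigma>1 \<sigma>2 \<tau>1 \<tau>2"
    by (simp add: mdd_def N')
  moreover have "\<bar>mdd (coons s t N) \<sigma>1 \<sigma>2 \<tau>1 \<tau>2 \<bullet> b\<bar> \<le> 3 * L" if "b \<in> Basis" for b
    unfolding mdd_inner coons_inner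
    using abs_mdd_coons_le[OF s t BMSDD_inner_Basis[OF N that] x y] .
  ultimately show "infnorm (mdd N' \<sigma>1 \<sigma>2 \<tau>1 \<tau>2) \<le> 3 * L"
    by (simp add: infnorm_Max)
qed

theorem corollary3:
  fixes s t :: "nat \<Rightarrow> int \<Rightarrow> real"
    and \<alpha>s \<beta>s \<alpha>t \<beta>t :: "nat \<Rightarrow> int \<Rightarrow> real"
    and N :: "nat \<Rightarrow> real \<times> real \<Rightarrow> real ^ 'm"
    and L :: real
  assumes W: "\<And>k. weightW (\<alpha>s k) (\<beta>s k)" "\<And>k. weightW (\<alpha>t k) (\<beta>t k)"
    and s0: "\<And>i. s 0 i = of_int i" and t0: "\<And>j. t 0 j = of_int j"
    and sS: "\<And>k. s (Suc k) = refine (\<alpha>s k) (\<beta>s k) (s k)"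
    and tS: "\<And>k. t (Suc k) = refine (\<alpha>t k) (\<beta>t k) (t k)"
    and NS: "\<And>k p. p \<in> grid (s (Suc k)) (t (Suc k)) \<Longrightarrow>
               N (Suc k) p = coons (s k) (t k) (N k) p"
    and C0: "C0_net (s 0) (t 0) (N 0)"
    and B0: "BMSDD (s 0) (t 0) (N 0) L"
  shows "\<forall>k. BMSDD (s k) (t k) (N k) (3 ^ k * L)"
proof -
  have lines: "grid_lines (s k) \<and> grid_lines (t k)" for k
  proof (induction k)
    case 0
    have "s 0 = real_of_int" "t 0 = real_of_int" using s0 t0 by auto
    then show ?case using grid_lines_of_int by simp
  next
    case (Suc k)
    then show ?case using grid_lines_refine W sS tS by metis
  qed
  have "BMSDD (s k) (t k) (N k) (3 ^ k * L)" for k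
  proof (induction k)
    case 0
    then show ?case using B0 by simp
  next
    case (Suc k)
    have "BMSDD (s (Suc k)) (t (Suc k)) (N (Suc k)) (3 * (3 ^ k * L))"
      using lines[of k] Suc.IH NS by (intro BMSDD_coons) auto
    then show ?case by (simp add: mult.assoc)
  qed
  then show ?thesis by blast
qed

end
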